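(* $\displaystyle\lim_{n\to\infty}\frac{l(8n+4)}{l(8n+3)}=\frac{257}{85}.$
   Context: For $n\ge 0$, $c(n)=\sum_{i=0}^{n}\left(\binom{n}{i}\bmod 2\right)2^{i}$, the integer whose binary digits form the $n$-th row of Pascal's triangle modulo $2$; one has $c(2n)\equiv1\pmod4$, and $l(n)=\frac{c(2n)-1}{4}$. (Stated in the paper as a conjecture of R. Stephan and proved there.) *)

theory Defs
  imports Complex_Main
begin

definition c :: "nat \<Rightarrow> nat" where
  "c n = (\<Sum>i=0..n. ((n choose i) mod 2) * 2 ^ i)"

definition l :: "nat \<Rightarrow> real" where
  "l n = (real (c (2 * n)) - 1) / 4"

end

theory Submission
  imports Defs "HOL-Real_Asymp.Real_Asymp"
begin

(* Reading the rows of Pascal's triangle modulo 2 as polynomials P_n(x), the parity rules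
   for binomial coefficients give P_(2n)(x) = P_n(x^2) and P_(2n+1)(x) = (1 + x) P_n(x^2),
   since (1 + x)^2 = 1 + x^2 over GF(2).  As c n = P_n(2), unfolding 16n + 8 and 16n + 6 in
   binary gives c(16n + 8) = (1 + 2^8) P_n(2^16) = 257 P_n(2^16) and
   c(16n + 6) = (1 + 2^2)(1 + 2^4) P_n(2^16) = 85 P_n(2^16).  Hence the ratio
   l(8n + 4) / l(8n + 3) is (257 P - 1)/(85 P - 1) with P = P_n(2^16) >= 2^(16 n),
   which tends to 257/85. *)

lemma binomial_Suc_Suc_Suc_Suc:
  "Suc (Suc m) choose Suc (Suc k) = (m choose k) + 2 * (m choose Suc k) + (m choose Suc (Suc k))"
  by (simp add: binomial_Suc_Suc)

lemma binomial_double_mod2: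
  "((2 * n) choose k) mod 2 = (if even k then (n choose (k div 2)) mod 2 else 0)"
proof (induction n arbitrary: k)
  case 0
  then show ?case by (cases k) auto
next
  case (Suc n)
  consider "k = 0" | "k = 1" | j where "k = Suc (Suc j)"
    by (metis One_nat_def not0_implies_Suc)
  then show ?case
  proof cases
    case 3
    have "((2 * Suc n) choose k) mod 2 = (((2 * n) choose j) + ((2 * n) choose Suc (Suc j))) mod 2"
      using binomial_Suc_Suc_Suc_Suc[of "2 * n" j] 3 by simp presburger
    also have "\<dots> = (((2 * n) choose j) mod 2 + ((2 * n) choose Suc (Suc j)) mod 2) mod 2"
      by (simp add: mod_add_eq)
    also have "\<dots> = (if even k then (Suc n choose (k div 2)) mod 2 else 0)"
    proof (cases "even j")
      case True
      then obtain i where "j = 2 * i" by blast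
      with 3 show ?thesis by (simp add: Suc.IH mod_add_eq)
    qed (use 3 Suc.IH in simp)
    finally show ?thesis .
  qed simp_all
qed

lemma binomial_Suc_double_mod2: "((2 * n + 1) choose k) mod 2 = (n choose (k div 2)) mod 2"
proof (cases k)
  case (Suc j)
  then have "((2 * n + 1) choose k) mod 2 = (((2 * n) choose j) mod 2 + ((2 * n) choose Suc j) mod 2) mod 2"
    by (simp add: mod_add_eq)
  then show ?thesis
    using Suc by (cases "even j") (auto simp: binomial_double_mod2 elim!: evenE oddE)
qed simp

definition pascal_mod2_row :: "nat \<Rightarrow> 'a::comm_semiring_1 \<Rightarrow> 'a" where
  "pascal_mod2_row n x = (\<Sum>i\<le>n. of_nat ((n choose i) mod 2) * x ^ i)"

lemma pascal_mod2_row_eq_lessThan: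
  assumes "n < N"
  shows "pascal_mod2_row n x = (\<Sum>i<N. of_nat ((n choose i) mod 2) * x ^ i)"
  unfolding pascal_mod2_row_def
  by (rule sum.mono_neutral_left) (use assms in \<open>auto simp: binomial_eq_0\<close>)

lemma sum_lessThan_double:
  "(\<Sum>i<2 * m. f i) = (\<Sum>j<m. f (2 * j)) + (\<Sum>j<m. f (2 * j + 1))"
  for f :: "nat \<Rightarrow> 'a::comm_monoid_add"
  by (induction m) (simp_all add: ac_simps)

lemma pascal_mod2_row_double: "pascal_mod2_row (2 * n) x = pascal_mod2_row n (x\<^sup>2)"
proof -
  have "pascal_mod2_row (2 * n) x = (\<Sum>i<2 * (n + 1). of_nat (((2 * n) choose i) mod 2) * x ^ i)"
    by (rule pascal_mod2_row_eq_lessThan) simp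
  also have "\<dots> = (\<Sum>j<n + 1. of_nat ((n choose j) mod 2) * (x\<^sup>2) ^ j)"
    unfolding sum_lessThan_double by (simp add: binomial_double_mod2 power_mult)
  also have "\<dots> = pascal_mod2_row n (x\<^sup>2)"
    by (rule pascal_mod2_row_eq_lessThan [symmetric]) simp
  finally show ?thesis .
qed

lemma pascal_mod2_row_Suc_double:
  "pascal_mod2_row (2 * n + 1) x = (1 + x) * pascal_mod2_row n (x\<^sup>2)"
proof -
  let ?R = "\<lambda>j. of_nat ((n choose j) mod 2) * (x\<^sup>2) ^ j"
  have powers: "x ^ (2 * j) = (x\<^sup>2) ^ j" "x ^ (2 * j + 1) = x * (x\<^sup>2) ^ j" for j
    by (simp_all add: power_mult)
  have "pascal_mod2_row (2 * n + 1) x = (\<Sum>i<2 * (n + 1). of_nat (((2 * n + 1) choose i) mod 2) * x ^ i)"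
    by (rule pascal_mod2_row_eq_lessThan) simp
  also have "\<dots> = (\<Sum>j<n + 1. ?R j) + (\<Sum>j<n + 1. x * ?R j)"
    unfolding sum_lessThan_double binomial_Suc_double_mod2 powers by (simp add: mult_ac)
  also have "\<dots> = (1 + x) * pascal_mod2_row n (x\<^sup>2)"
    unfolding pascal_mod2_row_eq_lessThan[of n "n + 1", OF less_add_one]
    by (simp only: distrib_right mult_1 sum_distrib_left sum.distrib)
  finally show ?thesis .
qed

lemma power_le_pascal_mod2_row:
  fixes x :: "'a::linordered_semidom"
  assumes "0 \<le> x"
  shows "x ^ n \<le> pascal_mod2_row n x"
proof -
  have "x ^ n = of_nat ((n choose n) mod 2) * x ^ n" by simp
  also have "\<dots> \<le> pascal_mod2_row n x"
    unfolding pascal_mod2_row_def by (rule member_le_sum) (use assms in auto)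
  finally show ?thesis .
qed

lemma c_eq_pascal_mod2_row: "real (c n) = pascal_mod2_row n 2"
  by (simp add: c_def pascal_mod2_row_def atLeast0AtMost)

lemma l_div_l_eq_pascal_mod2_row:
  "l m / l k = (pascal_mod2_row (2 * m) 2 - 1) / (pascal_mod2_row (2 * k) 2 - 1)"
proof -
  have "(a / 4) / (b / 4) = a / b" for a b :: real by simp
  then show ?thesis unfolding l_def c_eq_pascal_mod2_row .
qed

lemma pascal_mod2_row_16n8: "pascal_mod2_row (16 * n + 8) x = (1 + x ^ 8) * pascal_mod2_row n (x ^ 16)"
proof -
  have "16 * n + 8 = 2 * (2 * (2 * (2 * n + 1)))" by simp
  then show ?thesis
    by (simp only: pascal_mod2_row_double pascal_mod2_row_Suc_double) (simp flip: power_mult)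
qed

lemma pascal_mod2_row_16n6:
  "pascal_mod2_row (16 * n + 6) x = (1 + x\<^sup>2) * (1 + x ^ 4) * pascal_mod2_row n (x ^ 16)"
proof -
  have "16 * n + 6 = 2 * (2 * (2 * (2 * n) + 1) + 1)" by simp
  then show ?thesis
    by (simp only: pascal_mod2_row_double pascal_mod2_row_Suc_double) (simp add: mult.assoc flip: power_mult)
qed

lemma l_8n4_over_l_8n3:
  fixes n :: nat
  defines "P \<equiv> pascal_mod2_row n (65536 :: real)"
  shows "l (8 * n + 4) / l (8 * n + 3) = (257 * P - 1) / (85 * P - 1)"
proof -
  have "2 * (8 * n + 4) = 16 * n + 8" "2 * (8 * n + 3) = 16 * n + 6" by simp_all
  then show ?thesis
    by (simp add: l_div_l_eq_pascal_mod2_row pascal_mod2_row_16n8 pascal_mod2_row_16n6 P_def)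
qed

theorem mainTheorem12:
  shows "(\<lambda>n. l (8 * n + 4) / l (8 * n + 3)) \<longlonglongrightarrow> 257 / 85"
proof -
  define P where "P n = pascal_mod2_row n (65536 :: real)" for n
  have "filterlim (\<lambda>n. 65536 ^ n :: real) at_top sequentially"
    by real_asymp
  then have "filterlim P at_top sequentially"
    by (rule filterlim_at_top_mono) (simp add: P_def power_le_pascal_mod2_row)
  moreover have "((\<lambda>x::real. (257 * x - 1) / (85 * x - 1)) \<longlongrightarrow> 257 / 85) at_top"
    by real_asymp
  ultimately have "(\<lambda>n. (257 * P n - 1) / (85 * P n - 1)) \<longlonglongrightarrow> 257 / 85"
    by (rule filterlim_compose[rotated])
  then show ?thesis
    by (simp add: P_def l_8n4_over_l_8n3)
qed

end
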